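(* For every positive integer $k$ and every prime number $p$, $$v_p\bigl(F_{kp,k}\bigr) = -k.$$
   Context: For $n,k \in \mathbb{N}$ with $n \geq k$, $$F_{n,k} = \sum_{\substack{i_1,\dots,i_k \in \mathbb{N}^* \\ i_1+\dots+i_k = n}} \frac{1}{i_1 i_2 \cdots i_k},$$ where $\mathbb{N}^*$ denotes the positive integers. $v_p$ denotes the $p$-adic valuation on $\mathbb{Q}^*$. *)

theory Defs
  imports "HOL-Computational_Algebra.Computational_Algebra" "HOL-Library.FuncSet"
begin

definition compositions :: "nat \<Rightarrow> nat \<Rightarrow> (nat \<Rightarrow> nat) set" where
  "compositions n k = {i \<in> {1..k} \<rightarrow>\<^sub>E {1..n}. (\<Sum>j=1..k. i j) = n}"

definition F :: "nat \<Rightarrow> nat \<Rightarrow> rat" where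
  "F n k = (\<Sum>i\<in>compositions n k. 1 / (\<Prod>j=1..k. of_nat (i j)))"

text \<open>p-adic valuation on nonzero rationals (value 0 at 0 by convention).\<close>
definition padic_val :: "nat \<Rightarrow> rat \<Rightarrow> int" where
  "padic_val p x = (let (a, b) = quotient_of x in
     int (multiplicity (int p) a) - int (multiplicity (int p) b))"

end

theory Submission
  imports Defs
begin

text \<open>The composition (p, ..., p) contributes p^(-k) to F(kp, k). For any other
  composition (i_1, ..., i_k) write e_j = v_p(i_j); then p^(e_j) <= i_j gives p e_j <= i_j,
  so p (e_1 + ... + e_k) <= kp, and equality would force every e_j = 1 and every i_j = p.
  So all other terms have valuation at least 1 - k: F(kp, k) = (1 + p y) / p^k with y
  p-integral, and the numerator is prime to p.\<close>

lemma mult_multiplicity_le: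
  fixes p n :: nat
  assumes "n > 0"
  shows "p * multiplicity p n \<le> n"
proof (cases "p \<ge> 2")
  case True
  have "p * e \<le> p ^ e" for e
  proof (cases e)
    case (Suc m)
    have "Suc m \<le> 2 ^ m" by (rule Suc_leI[OF less_exp])
    also have "\<dots> \<le> p ^ m" using True by (intro power_mono) auto
    finally have "p * Suc m \<le> p * p ^ m" by (rule mult_le_mono2)
    with Suc show ?thesis by simp
  qed simp
  then have "p * multiplicity p n \<le> p ^ multiplicity p n" .
  also have "\<dots> \<le> n"
    using assms by (intro dvd_imp_le multiplicity_dvd)
  finally show ?thesis .
next
  case False
  then have "p = 0 \<or> p = 1" by auto
  then show ?thesis by (auto simp: multiplicity_unit_left)
qed

lemma finite_compositions: "finite (compositions n k)"
  unfolding compositions_def by (rule finite_subset[OF _ finite_PiE[of "{1..k}" "\<lambda>_. {1..n}"]]) auto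

lemma compositions_pos: "i \<in> compositions n k \<Longrightarrow> j \<in> {1..k} \<Longrightarrow> i j > 0"
  unfolding compositions_def by (auto simp: PiE_iff Suc_le_eq)

lemma constant_composition:
  "p > 0 \<Longrightarrow> restrict (\<lambda>_. p) {1..k} \<in> compositions (k * p) k"
  unfolding compositions_def by auto

lemma multiplicity_prod_composition:
  assumes "prime p" "i \<in> compositions n k"
  shows "multiplicity p (\<Prod>j=1..k. i j) = (\<Sum>j=1..k. multiplicity p (i j))"
  using assms compositions_pos[OF assms(2)]
  by (intro prime_elem_multiplicity_prod_distrib) (auto simp: image_iff)

lemma multiplicity_prod_composition_less:
  assumes p: "prime p"
    and i: "i \<in> compositions (k * p) k" "i \<noteq> restrict (\<lambda>_. p) {1..k}"
  shows "multiplicity p (\<Prod>j=1..k. i j) < k"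
proof (rule ccontr)
  define e where "e j = multiplicity p (i j)" for j
  assume "\<not> ?thesis"
  then have sum_e_ge: "k \<le> (\<Sum>j=1..k. e j)"
    using multiplicity_prod_composition[OF p i(1)] by (simp add: e_def)
  have pe_le: "p * e j \<le> i j" if "j \<in> {1..k}" for j
    unfolding e_def using compositions_pos[OF i(1) that] by (rule mult_multiplicity_le)
  have sum_i: "(\<Sum>j=1..k. i j) = k * p"
    using i(1) unfolding compositions_def by simp
  have "(\<Sum>j=1..k. i j) = p * k" using sum_i by simp
  also have "\<dots> \<le> p * (\<Sum>j=1..k. e j)" using sum_e_ge by simp
  also have "\<dots> = (\<Sum>j=1..k. p * e j)" by (simp add: sum_distrib_left)
  finally have "(\<Sum>j=1..k. i j) \<le> (\<Sum>j=1..k. p * e j)" .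
  moreover have "(\<Sum>j=1..k. p * e j) \<le> (\<Sum>j=1..k. i j)"
    using pe_le by (rule sum_mono)
  ultimately have sum_pe: "(\<Sum>j=1..k. p * e j) = (\<Sum>j=1..k. i j)"
    by (rule antisym[rotated])
  have pe_eq: "p * e j = i j" if "j \<in> {1..k}" for j
    using sum_mono_inv[OF sum_pe pe_le that] pe_le by simp
  have "p * (\<Sum>j=1..k. e j) = p * k"
    using sum_pe sum_i by (simp add: sum_distrib_left)
  then have sum_e: "(\<Sum>j=1..k. 1) = (\<Sum>j=1..k. e j)"
    using prime_gt_0_nat[OF p] by simp
  have e_pos: "1 \<le> e j" if "j \<in> {1..k}" for j
    using pe_eq[OF that] compositions_pos[OF i(1) that] by (cases "e j") auto
  have "i j = p" if "j \<in> {1..k}" for j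
  proof -
    have "e j = 1" using sum_mono_inv[OF sum_e e_pos that] by simp
    then show ?thesis using pe_eq[OF that] by simp
  qed
  moreover have "i \<in> extensional {1..k}"
    using i(1) unfolding compositions_def by (simp add: PiE_def)
  ultimately have "i = restrict (\<lambda>_. p) {1..k}"
    by (intro extensionalityI[of _ "{1..k}"]) auto
  with i(2) show False ..
qed

definition p_integral :: "nat \<Rightarrow> rat \<Rightarrow> bool" where
  "p_integral p x \<longleftrightarrow> (\<exists>a b. b > 0 \<and> \<not> int p dvd b \<and> x = of_int a / of_int b)"

lemma p_integral_add:
  assumes p: "prime p" and "p_integral p x" "p_integral p y"
  shows "p_integral p (x + y)"
proof -
  obtain a b where ab: "b > 0" "\<not> int p dvd b" "x = of_int a / of_int b"
    using assms(2) unfolding p_integral_def by blast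
  obtain a' b' where ab': "b' > 0" "\<not> int p dvd b'" "y = of_int a' / of_int b'"
    using assms(3) unfolding p_integral_def by blast
  have "\<not> int p dvd b * b'"
    using ab(2) ab'(2) p by (simp add: prime_dvd_mult_iff)
  moreover have "x + y = of_int (a * b' + a' * b) / of_int (b * b')"
    using ab ab' by (simp add: field_simps)
  ultimately show ?thesis
    unfolding p_integral_def using ab(1) ab'(1)
    by (intro exI[of _ "a * b' + a' * b"] exI[of _ "b * b'"]) auto
qed

lemma p_integral_sum:
  assumes "prime p" "\<And>a. a \<in> A \<Longrightarrow> p_integral p (f a)"
  shows "p_integral p (\<Sum>a\<in>A. f a)"
proof -
  have "p_integral p 0"
    unfolding p_integral_def using assms(1) by (intro exI[of _ 0] exI[of _ 1]) auto
  with assms(2) show ?thesis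
  proof (induction A rule: infinite_finite_induct)
    case (insert a A)
    then show ?case by (simp add: p_integral_add[OF assms(1)])
  qed simp_all
qed

lemma p_integral_power_div:
  assumes p: "prime p" and "n > 0" "multiplicity p n \<le> m"
  shows "p_integral p (of_nat p ^ m / of_nat n)"
proof -
  have "n \<noteq> 0" "\<not> is_unit p" using \<open>n > 0\<close> p by auto
  then obtain q where q: "n = p ^ multiplicity p n * q" "\<not> p dvd q"
    by (rule multiplicity_decompose')
  have "q > 0" using q(1) \<open>n > 0\<close> by (cases q) auto
  have "(of_nat p ^ m / of_nat n :: rat)
      = of_nat p ^ (m - multiplicity p n) * of_nat p ^ multiplicity p n / of_nat n"
    using \<open>multiplicity p n \<le> m\<close> by (simp flip: power_add)
  also have "\<dots> = of_int (int p ^ (m - multiplicity p n)) / of_int (int q)"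
    using p \<open>q > 0\<close> by (subst (2) q(1)) (simp add: prime_gt_0_nat)
  finally show ?thesis
    unfolding p_integral_def using \<open>q > 0\<close> q(2)
    by (intro exI[of _ "int p ^ (m - multiplicity p n)"] exI[of _ "int q"]) auto
qed

lemma padic_val_of_int_div:
  fixes a b :: int
  assumes p: "prime p" and "a \<noteq> 0" "b > 0"
  shows "padic_val p (of_int a / of_int b) = int (multiplicity (int p) a) - int (multiplicity (int p) b)"
proof -
  obtain n d where q: "quotient_of (of_int a / of_int b) = (n, d)"
    by (cases "quotient_of (of_int a / of_int b)")
  have "d > 0" using quotient_of_denom_pos[OF q] .
  have eq: "(of_int a / of_int b :: rat) = of_int n / of_int d"
    using quotient_of_div[OF q] .
  then have "n \<noteq> 0" using assms \<open>d > 0\<close> by auto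
  have "(of_int (a * d) :: rat) = of_int (n * b)"
    using eq \<open>b > 0\<close> \<open>d > 0\<close> by (simp add: field_simps)
  then have "a * d = n * b" by (simp only: of_int_eq_iff)
  moreover have "prime_elem (int p)" using p by simp
  ultimately have "multiplicity (int p) a + multiplicity (int p) d
      = multiplicity (int p) n + multiplicity (int p) b"
    using assms \<open>n \<noteq> 0\<close> \<open>d > 0\<close>
    by (metis less_irrefl prime_elem_multiplicity_mult_distrib)
  then show ?thesis unfolding padic_val_def q by simp
qed

lemma padic_val_one_plus_p_integral_div_power:
  assumes p: "prime p" and "p_integral p y"
  shows "padic_val p ((1 + of_nat p * y) / of_nat p ^ k) = - int k"
proof -
  obtain a b where ab: "b > 0" "\<not> int p dvd b" "y = of_int a / of_int b"
    using assms(2) unfolding p_integral_def by blast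
  have num: "\<not> int p dvd b + int p * a"
    using ab(2) by (simp add: dvd_add_left_iff)
  then have "b + int p * a \<noteq> 0" by auto
  have "(1 + of_nat p * y) / of_nat p ^ k = (of_int (b + int p * a) / of_int (int p ^ k * b) :: rat)"
    using ab p by (simp add: field_simps prime_gt_0_nat)
  moreover have "multiplicity (int p) (int p ^ k * b) = k"
    using p ab by (simp add: prime_elem_multiplicity_mult_distrib not_dvd_imp_multiplicity_0)
  ultimately show ?thesis
    using padic_val_of_int_div[OF p \<open>b + int p * a \<noteq> 0\<close>, of "int p ^ k * b"] p ab(1) num
    by (simp add: not_dvd_imp_multiplicity_0 prime_gt_0_nat)
qed

theorem lemma3:
  fixes k p :: nat
  assumes "k > 0" and "prime p"
  shows "padic_val p (F (k * p) k) = - int k"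
proof -
  define c where "c = restrict (\<lambda>_. p) {1..k}"
  define C where "C = compositions (k * p) k"
  define y where "y = (\<Sum>i\<in>C - {c}. of_nat p ^ (k - 1) / of_nat (\<Prod>j=1..k. i j) :: rat)"
  have "p_integral p (of_nat p ^ (k - 1) / of_nat (\<Prod>j=1..k. i j))" if "i \<in> C - {c}" for i
  proof (rule p_integral_power_div[OF assms(2)])
    show "(\<Prod>j=1..k. i j) > 0"
      using that compositions_pos[of i "k * p" k] unfolding C_def by (intro prod_pos) auto
    show "multiplicity p (\<Prod>j=1..k. i j) \<le> k - 1"
      using that multiplicity_prod_composition_less[OF assms(2)] unfolding C_def c_def
      by fastforce
  qed
  then have "p_integral p y"
    unfolding y_def by (rule p_integral_sum[OF assms(2)])
  have "c \<in> C"
    unfolding c_def C_def using assms by (intro constant_composition) (simp add: prime_gt_0_nat)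
  then have "F (k * p) k = 1 / of_nat p ^ k + (\<Sum>i\<in>C - {c}. 1 / of_nat (\<Prod>j=1..k. i j))"
    unfolding F_def C_def[symmetric] using finite_compositions[of "k * p" k]
    by (simp add: sum.remove C_def[symmetric] c_def)
  also have "\<dots> = (1 + of_nat p * y) / of_nat p ^ k"
    using assms by (simp add: y_def sum_distrib_left sum_divide_distrib field_simps
                                  power_Suc[symmetric] prime_gt_0_nat)
  finally show ?thesis
    using padic_val_one_plus_p_integral_div_power[OF assms(2) \<open>p_integral p y\<close>] by simp
qed

end
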